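(* Let $q$ be an odd prime power, $s=(q-1)/2$, $a_0,a_1\in\mathbb{F}_q^*$ and $r_0,r_1$ positive integers. Let $$f(x)=\tfrac12 a_0x^{r_0}(1+x^s)+\tfrac12 a_1x^{r_1}(1-x^s).$$ If $f$ is a permutation polynomial of $\mathbb{F}_q$, then its inverse over $\mathbb{F}_q$ is given by $$f^{-1}(x)=\frac12\left(\frac{x}{a_0}\right)^{\tilde r_0}\left(1+\left(\frac{x}{a_0}\right)^s\right)+\frac12(-1)^{t_1}\left(\frac{x}{a_1}\right)^{\tilde r_1}\left(1+(-1)^{r_1}\left(\frac{x}{a_1}\right)^s\right),$$ where $\tilde r_i,t_i\in\mathbb{Z}$ satisfy $1\le\tilde r_i<s$ and $r_i\tilde r_i+st_i=1$ for $i=0,1$.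
   Context: A polynomial $f\in\mathbb{F}_q[x]$ is a permutation polynomial of $\mathbb{F}_q$ if it induces a bijection of $\mathbb{F}_q$. A polynomial $g$ is the inverse of $f$ over $\mathbb{F}_q$ if $g(f(c))=c$ for all $c\in\mathbb{F}_q$. *)

theory Defs
  imports "HOL-Computational_Algebra.Polynomial"
begin

definition perm_poly :: "'a::{finite,field} poly \<Rightarrow> bool" where
  "perm_poly p \<longleftrightarrow> bij (poly p)"

definition inverse_poly_of :: "'a::{finite,field} poly \<Rightarrow> 'a poly \<Rightarrow> bool" where
  "inverse_poly_of g f \<longleftrightarrow> (\<forall>c. poly g (poly f c) = c)"

definition f_poly :: "'a::field \<Rightarrow> 'a \<Rightarrow> nat \<Rightarrow> nat \<Rightarrow> nat \<Rightarrow> 'a poly" where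
  "f_poly a0 a1 r0 r1 s =
     smult (a0 / 2) ([:0, 1:] ^ r0 * (1 + [:0, 1:] ^ s))
   + smult (a1 / 2) ([:0, 1:] ^ r1 * (1 - [:0, 1:] ^ s))"

definition g_poly :: "'a::field \<Rightarrow> 'a \<Rightarrow> nat \<Rightarrow> nat \<Rightarrow> nat \<Rightarrow> int \<Rightarrow> nat \<Rightarrow> 'a poly" where
  "g_poly a0 a1 r1 rt0 rt1 t1 s =
     smult (1 / 2) ([:0, 1 / a0:] ^ rt0 * (1 + [:0, 1 / a0:] ^ s))
   + smult (((-1) powi t1) / 2)
       ([:0, 1 / a1:] ^ rt1 * (1 + smult ((-1) ^ r1) ([:0, 1 / a1:] ^ s)))"

end

theory Submission
  imports Defs
begin

text \<open>
  Write \<open>q = 2s + 1\<close>. For \<open>c \<noteq> 0\<close> the quadratic character \<open>c\<^sup>s\<close> is \<open>\<plusminus>1\<close>, and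
  \<open>f(c) = a\<^sub>0 c\<^bsup>r\<^sub>0\<^esup>\<close> on squares, \<open>f(c) = a\<^sub>1 c\<^bsup>r\<^sub>1\<^esup>\<close> on non-squares.
  If \<open>a\<^sub>0\<^sup>s = (-1)\<^bsup>r\<^sub>1\<^esup> a\<^sub>1\<^sup>s\<close>, then \<open>f(c)\<^sup>s\<close> would be the same for all \<open>c \<noteq> 0\<close>,
  so the \<open>2s\<close> nonzero values of \<open>f\<close> would be roots of a polynomial of degree \<open>s\<close>.
  So a permutation \<open>f\<close> satisfies \<open>a\<^sub>0\<^sup>s = -(-1)\<^bsup>r\<^sub>1\<^esup> a\<^sub>1\<^sup>s\<close>, which makes exactly one of
  the two halves of the claimed inverse vanish at \<open>f(c)\<close>, according to the character of \<open>c\<close>.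
  The other half recovers \<open>c\<close>: the Bezout relation forces \<open>r\<^sub>i r\<^sub>i' = 1 + s k\<^sub>i\<close> with
  \<open>k\<^sub>i \<ge> 0\<close>, so \<open>(c\<^bsup>r\<^sub>i\<^esup>)\<^bsup>r\<^sub>i'\<^esup> = c (c\<^sup>s)\<^bsup>k\<^sub>i\<^esup>\<close>.
\<close>

lemma finite_field_power_card:
  fixes x :: "'a::{finite,field}"
  shows "x ^ card (UNIV :: 'a set) = x"
proof (cases "x = 0")
  case False
  have "x * (\<Prod>y\<in>UNIV-{0}. x * y) = x * x ^ (card (UNIV :: 'a set) - 1) * \<Prod>(UNIV-{0})"
    by (simp add: prod.distrib mult_ac)
  also have "x * x ^ (card (UNIV :: 'a set) - 1) = x ^ card (UNIV :: 'a set)"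
    using finite_UNIV_card_ge_0[where ?'a = 'a] by (simp flip: power_Suc)
  also have "(\<Prod>y\<in>UNIV-{0}. x * y) = (\<Prod>y\<in>UNIV-{0}. y)"
    by (rule prod.reindex_bij_witness[of _ "\<lambda>y. y / x" "\<lambda>y. x * y"]) (use False in auto)
  finally show ?thesis
    by simp
qed (use finite_UNIV_card_ge_0[where ?'a = 'a] in auto)

lemma power_power_commute: "(x ^ m) ^ n = (x ^ n) ^ m" for x :: "'a::monoid_mult"
  by (simp flip: power_mult add: mult.commute)

lemma finite_field_power_half_card:
  fixes x :: "'a::{finite,field}"
  assumes "card (UNIV :: 'a set) = 2 * s + 1" and "x \<noteq> 0"
  shows "x ^ s = 1 \<or> x ^ s = -1"
proof -
  have "x * (x ^ s) ^ 2 = x * 1"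
    using finite_field_power_card[of x] assms(1) by (simp add: power_mult_distrib power_mult mult.commute)
  then have "(x ^ s) ^ 2 = 1"
    using assms(2) by simp
  then show ?thesis
    by (simp add: power2_eq_1_iff)
qed

lemma card_power_eq_le:
  fixes c :: "'a::idom"
  assumes "s > 0"
  shows "card {y. y ^ s = c} \<le> s"
proof -
  define p where "p = [:-c:] + monom 1 s"
  have deg: "degree p = s"
    using assms by (simp add: p_def degree_add_eq_right degree_monom_eq)
  then have "p \<noteq> 0"
    using assms by auto
  moreover have "{y. y ^ s = c} = {y. poly p y = 0}"
    by (simp add: p_def poly_monom)
  ultimately show ?thesis
    using card_poly_roots_bound deg by metis
qed

lemma bezout_one_cofactor_nonposE:
  fixes r r' s :: nat and t :: int
  assumes "r > 0" and "r' \<ge> 1" and "s > 0" and "int r * int r' + int s * t = 1"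
  obtains k where "r * r' = 1 + s * k" and "t = - int k"
proof -
  have "r * r' \<ge> 1"
    using assms(1,2) by (simp add: Suc_le_eq)
  then have "int r * int r' \<ge> 1"
    by (metis of_nat_mult of_nat_1 of_nat_le_iff)
  then have "t \<le> 0"
    using assms(3,4) by (smt (verit) mult_pos_pos of_nat_0_less_iff)
  then have "int (r * r') = int (1 + s * nat (- t))"
    using assms(4) by simp
  then have "r * r' = 1 + s * nat (- t)"
    by (simp only: of_nat_eq_iff)
  with \<open>t \<le> 0\<close> show ?thesis
    by (intro that[of "nat (- t)"]) simp_all
qed

lemma poly_f_poly:
  "poly (f_poly a0 a1 r0 r1 s) c = a0/2 * (c^r0 * (1 + c^s)) + a1/2 * (c^r1 * (1 - c^s))"
  by (simp add: f_poly_def)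

lemma poly_f_poly_0:
  assumes "r0 > 0" and "r1 > 0"
  shows "poly (f_poly a0 a1 r0 r1 s) 0 = 0"
  using assms by (simp add: poly_f_poly power_0_left)

lemma poly_f_poly_if_power_eq_1:
  fixes a0 a1 c :: "'a::field"
  assumes "(2::'a) \<noteq> 0" and "c ^ s = 1"
  shows "poly (f_poly a0 a1 r0 r1 s) c = a0 * c ^ r0"
  using assms by (simp add: poly_f_poly field_simps)

lemma poly_f_poly_if_power_eq_minus_1:
  fixes a0 a1 c :: "'a::field"
  assumes "(2::'a) \<noteq> 0" and "c ^ s = -1"
  shows "poly (f_poly a0 a1 r0 r1 s) c = a1 * c ^ r1"
  using assms by (simp add: poly_f_poly field_simps)

text \<open>In characteristic 2 the factors \<open>1/2\<close> are \<open>0\<close>, so \<open>f\<close> vanishes identically.\<close>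

lemma perm_poly_f_poly_imp_two_neq_0:
  assumes "perm_poly (f_poly a0 a1 r0 r1 s :: 'a::{finite,field} poly)"
  shows "(2::'a) \<noteq> 0"
proof
  assume "(2::'a) = 0"
  then have "poly (f_poly a0 a1 r0 r1 s) 0 = poly (f_poly a0 a1 r0 r1 s) 1"
    by (simp add: poly_f_poly)
  with assms show False
    unfolding perm_poly_def by (metis bij_pointE zero_neq_one)
qed

lemma power_poly_f_poly_const:
  fixes a0 a1 :: "'a::{finite,field}"
  assumes "card (UNIV :: 'a set) = 2 * s + 1" and "(2::'a) \<noteq> 0"
    and "a1 ^ s * (-1) ^ r1 = a0 ^ s" and "c \<noteq> 0"
  shows "(poly (f_poly a0 a1 r0 r1 s) c) ^ s = a0 ^ s"
  using finite_field_power_half_card[OF assms(1,4)]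
proof
  assume "c ^ s = 1"
  then show ?thesis
    using assms(2)
    by (simp add: poly_f_poly_if_power_eq_1 power_mult_distrib power_power_commute[of c r0])
next
  assume "c ^ s = -1"
  then show ?thesis
    using assms(2,3)
    by (simp add: poly_f_poly_if_power_eq_minus_1 power_mult_distrib power_power_commute[of c r1])
qed

lemma perm_poly_f_poly_character_condition:
  fixes a0 a1 :: "'a::{finite,field}"
  assumes "card (UNIV :: 'a set) = 2 * s + 1" and "a0 \<noteq> 0" and "a1 \<noteq> 0" and "r0 > 0" and "r1 > 0"
    and "perm_poly (f_poly a0 a1 r0 r1 s)"
  shows "a1 ^ s * (-1) ^ r1 = - (a0 ^ s)"
proof (rule ccontr)
  assume neq: "a1 ^ s * (-1) ^ r1 \<noteq> - (a0 ^ s)"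
  define F where "F = poly (f_poly a0 a1 r0 r1 s)"
  have bij: "bij F"
    using assms(6) by (simp add: F_def perm_poly_def)
  have two: "(2::'a) \<noteq> 0"
    using perm_poly_f_poly_imp_two_neq_0 assms(6) .
  have "a1 ^ s * (-1) ^ r1 = a0 ^ s"
    using finite_field_power_half_card[OF assms(1,2)] finite_field_power_half_card[OF assms(1,3)]
      neq by (cases "even r1") auto
  then have "F ` (UNIV - {0}) \<subseteq> {y. y ^ s = a0 ^ s}"
    using power_poly_f_poly_const[OF assms(1) two] by (auto simp: F_def)
  moreover have "F ` (UNIV - {0}) = UNIV - {0}"
    using bij assms(4,5) by (simp add: F_def bij_def image_set_diff poly_f_poly_0)
  ultimately have "card (UNIV - {0::'a}) \<le> card {y. y ^ s = a0 ^ s}"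
    by (intro card_mono) auto
  moreover have "s > 0"
    using card_mono[of UNIV "{0::'a, 1}"] assms(1) by simp
  ultimately show False
    using card_power_eq_le[of s "a0 ^ s"] assms(1) by simp
qed

lemma poly_g_poly:
  "poly (g_poly a0 a1 r1 rt0 rt1 t1 s) y =
     1/2 * ((y/a0)^rt0 * (1 + (y/a0)^s))
   + (-1) powi t1 / 2 * ((y/a1)^rt1 * (1 + (-1)^r1 * (y/a1)^s))"
  by (simp add: g_poly_def)

lemma g_poly_inverse_f_poly:
  fixes a0 a1 :: "'a::{finite,field}"
  assumes "card (UNIV :: 'a set) = 2 * s + 1" and "(2::'a) \<noteq> 0" and "a0 \<noteq> 0" and "a1 \<noteq> 0"
    and "r0 > 0" and "r1 > 0" and "rt0 > 0" and "rt1 > 0"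
    and "r0 * rt0 = 1 + s * k0" and "r1 * rt1 = 1 + s * k1"
    and "a1 ^ s * (-1) ^ r1 = - (a0 ^ s)"
  shows "inverse_poly_of (g_poly a0 a1 r1 rt0 rt1 (- int k1) s) (f_poly a0 a1 r0 r1 s)"
  unfolding inverse_poly_of_def
proof
  fix c :: 'a
  define G where "G = poly (g_poly a0 a1 r1 rt0 rt1 (- int k1) s)"
  have G: "G y = 1/2 * ((y/a0)^rt0 * (1 + (y/a0)^s))
                 + (-1)^k1 / 2 * ((y/a1)^rt1 * (1 + (-1)^r1 * (y/a1)^s))" for y
    unfolding G_def poly_g_poly by (cases "even k1") (simp_all add: power_int_minus)
  have sign: "(-1::'a) ^ n * (-1) ^ n = 1" for n
    by (simp flip: power_add)
  have cond: "(-1) ^ r1 * a0 ^ s = - (a1 ^ s)"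
    using assms(11) by (cases "even r1") auto
  consider "c = 0" | "c ^ s = 1" | "c ^ s = -1"
    using finite_field_power_half_card[OF assms(1)] by blast
  then show "G (poly (f_poly a0 a1 r0 r1 s) c) = c"
  proof cases
    case 1
    then show ?thesis
      using assms(5-8) by (simp add: G poly_f_poly_0 power_0_left)
  next
    case 2
    then have fc: "poly (f_poly a0 a1 r0 r1 s) c = a0 * c ^ r0"
      by (rule poly_f_poly_if_power_eq_1[OF assms(2)])
    have "(c ^ r0) ^ rt0 = c * (c ^ s) ^ k0"
      by (simp add: assms(9) power_add power_mult flip: power_mult)
    then have "(c ^ r0) ^ rt0 = c"
      using 2 by simp
    moreover have "(c ^ r0) ^ s = 1"
      using 2 by (simp add: power_power_commute[of c r0])
    moreover have "1 + (-1)^r1 * (a0 * c ^ r0 / a1) ^ s = 0"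
      using 2 assms(4) cond
      by (simp add: power_divide power_mult_distrib power_power_commute[of c r0] field_simps)
    ultimately show ?thesis
      using assms(2,3) by (simp add: G fc)
  next
    case 3
    then have fc: "poly (f_poly a0 a1 r0 r1 s) c = a1 * c ^ r1"
      by (rule poly_f_poly_if_power_eq_minus_1[OF assms(2)])
    have "(c ^ r1) ^ rt1 = c * (c ^ s) ^ k1"
      by (simp add: assms(10) power_add power_mult flip: power_mult)
    then have "(c ^ r1) ^ rt1 = c * (-1) ^ k1"
      using 3 by simp
    moreover have "(c ^ r1) ^ s = (-1) ^ r1"
      using 3 by (simp add: power_power_commute[of c r1])
    moreover have "1 + (a1 * c ^ r1 / a0) ^ s = 0"
      using 3 assms(3,11)
      by (simp add: power_divide power_mult_distrib power_power_commute[of c r1] field_simps)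
    ultimately show ?thesis
      using assms(2,4) sign[of k1] sign[of r1] by (simp add: G fc field_simps)
  qed
qed

theorem corollary4p1:
  fixes a0 a1 :: "'a::{finite,field}"
    and r0 r1 s rt0 rt1 :: nat and t0 t1 :: int
  assumes "odd (card (UNIV :: 'a set))"
    and "s = (card (UNIV :: 'a set) - 1) div 2"
    and "a0 \<noteq> 0" and "a1 \<noteq> 0"
    and "r0 > 0" and "r1 > 0"
    and "1 \<le> rt0" and "rt0 < s" and "int r0 * int rt0 + int s * t0 = 1"
    and "1 \<le> rt1" and "rt1 < s" and "int r1 * int rt1 + int s * t1 = 1"
    and "perm_poly (f_poly a0 a1 r0 r1 s)"
  shows "inverse_poly_of (g_poly a0 a1 r1 rt0 rt1 t1 s) (f_poly a0 a1 r0 r1 s)"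
proof -
  have card: "card (UNIV :: 'a set) = 2 * s + 1"
    using assms(1,2) by presburger
  have "s > 0"
    using assms(8) by simp
  obtain k0 where k0: "r0 * rt0 = 1 + s * k0"
    using bezout_one_cofactor_nonposE[OF assms(5,7) \<open>s > 0\<close> assms(9)] by blast
  obtain k1 where k1: "r1 * rt1 = 1 + s * k1" and t1: "t1 = - int k1"
    using bezout_one_cofactor_nonposE[OF assms(6,10) \<open>s > 0\<close> assms(12)] by blast
  show ?thesis
    unfolding t1
    using g_poly_inverse_f_poly[OF card perm_poly_f_poly_imp_two_neq_0[OF assms(13)] assms(3-6) _ _ k0 k1
        perm_poly_f_poly_character_condition[OF card assms(3-6,13)]] assms(7,10)
    by simp
qed

end
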